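(* For $\theta\in[0,\pi/2]$ let $C_\theta=\cos\theta\,(|\uparrow\rangle\langle\uparrow|+|\downarrow\rangle\langle\downarrow|)+\sin\theta\,(|\uparrow\rangle\langle\downarrow|-|\downarrow\rangle\langle\uparrow|)$ and $\gamma_*=\tfrac{1}{\sqrt2}(|\uparrow\rangle+i|\downarrow\rangle)$. Then: (i) for every $\theta\in[0,\pi/2]$ the coin setup $(C_\theta,\gamma_* )$ is symmetric in distribution; (ii) every coin setup $(C,\gamma)$ (with $C\in U(2)$ arbitrary and $\gamma\in\mathbb{C}^2$ a unit vector) that is symmetric in distribution is distributionally equivalent to $(C_\theta,\gamma_* )$ for some $\theta\in[0,\pi/2]$; (iii) if $\theta,\theta'\in[0,\pi/2]$ and $(C_\theta,\gamma_* )\sim_d(C_{\theta'},\gamma_* )$, then $\theta=\theta'$. In other words, $\theta\mapsto(C_\theta,\gamma_* )$ induces a bijection between $[0,\pi/2]$ and the distributional equivalence classes of coin setups that are symmetric in distribution.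
   Context: Let $\mathcal{H}=\ell^2(\mathbb{Z})\otimes\mathbb{C}^2$, with position basis $\{|j\rangle: j\in\mathbb{Z}\}$ of $\ell^2(\mathbb{Z})$ and orthonormal basis $\{|\uparrow\rangle,|\downarrow\rangle\}$ of $\mathbb{C}^2$. A (quantum) coin is any $C\in U(2)$. The conditional translation is $T=\sum_{j\in\mathbb{Z}}|j+1\rangle\langle j|\otimes|\uparrow\rangle\langle\uparrow|+\sum_{j\in\mathbb{Z}}|j-1\rangle\langle j|\otimes|\downarrow\rangle\langle\downarrow|$ and the walk operator is $W(C)=T(\mathbb{1}\otimes C)$. A coin setup is a pair $(C,\gamma)$ with $C\in U(2)$ and $\gamma\in\mathbb{C}^2$ a unit vector (the initial coin state). Its induced distributions are $p_{(C,\gamma)}(j,n)=\langle\psi_n|(|j\rangle\langle j|\otimes\mathbb{1})|\psi_n\rangle$ with $\psi_n=W(C)^n(|0\rangle\otimes\gamma)$, for $j\in\mathbb{Z}$, $n\in\mathbb{N}$. A coin setup is called symmetric in distribution if $p_{(C,\gamma)}(j,n)=p_{(C,\gamma)}(-j,n)$ for all $j\in\mathbb{Z}$ and all $n\in\mathbb{N}$. Two coin setups $\mathcal{C}_1,\mathcal{C}_2$ are distributionally equivalent, written $\mathcal{C}_1\sim_d\mathcal{C}_2$, if $p_{\mathcal{C}_1}(j,n)=p_{\mathcal{C}_2}(j,n)$ for all $j\in\mathbb{Z}$, $n\in\mathbb{N}$. *)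

theory Defs
  imports "HOL-Analysis.Analysis"
begin

text \<open>Coin space C^2 is complex^2; index 1 is the up-state, index 2 the down-state. A walker state is a
  function int => complex^2 (position amplitude map), i.e. an element of
  l^2(Z) tensor C^2 written componentwise.\<close>

definition adj_mat :: "complex^2^2 \<Rightarrow> complex^2^2" where
  "adj_mat C = (\<chi> i j. cnj (C $ j $ i))"

definition unitary2 :: "complex^2^2 \<Rightarrow> bool" where
  "unitary2 C \<longleftrightarrow> adj_mat C ** C = mat 1 \<and> C ** adj_mat C = mat 1"

definition up :: "2" where "up = 1"
definition down :: "2" where "down = 2"

definition walk_step :: "complex^2^2 \<Rightarrow> (int \<Rightarrow> complex^2) \<Rightarrow> (int \<Rightarrow> complex^2)" where
  "walk_step C \<psi> = (\<lambda>j. \<chi> s. if s = up then (C *v \<psi> (j - 1)) $ up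
                                       else (C *v \<psi> (j + 1)) $ down)"

definition walk_state :: "complex^2^2 \<Rightarrow> complex^2 \<Rightarrow> nat \<Rightarrow> (int \<Rightarrow> complex^2)" where
  "walk_state C \<gamma> n = (walk_step C ^^ n) (\<lambda>j. if j = 0 then \<gamma> else 0)"

definition walk_dist :: "complex^2^2 \<Rightarrow> complex^2 \<Rightarrow> int \<Rightarrow> nat \<Rightarrow> real" where
  "walk_dist C \<gamma> j n = (norm (walk_state C \<gamma> n j))\<^sup>2"

definition coin_setup :: "complex^2^2 \<Rightarrow> complex^2 \<Rightarrow> bool" where
  "coin_setup C \<gamma> \<longleftrightarrow> unitary2 C \<and> norm \<gamma> = 1"

definition symmetric_in_distribution :: "complex^2^2 \<Rightarrow> complex^2 \<Rightarrow> bool" where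
  "symmetric_in_distribution C \<gamma> \<longleftrightarrow> (\<forall>j n. walk_dist C \<gamma> j n = walk_dist C \<gamma> (-j) n)"

definition dist_equiv :: "complex^2^2 \<Rightarrow> complex^2 \<Rightarrow> complex^2^2 \<Rightarrow> complex^2 \<Rightarrow> bool" where
  "dist_equiv C1 \<gamma>1 C2 \<gamma>2 \<longleftrightarrow> (\<forall>j n. walk_dist C1 \<gamma>1 j n = walk_dist C2 \<gamma>2 j n)"

definition coin_theta :: "real \<Rightarrow> complex^2^2" where
  "coin_theta \<theta> = (\<chi> r c. if r = c then complex_of_real (cos \<theta>)
                         else if r = up then complex_of_real (sin \<theta>)
                         else - complex_of_real (sin \<theta>))"

definition gamma_star :: "complex^2" where
  "gamma_star = (\<chi> s. if s = up then complex_of_real (1 / sqrt 2)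
                      else \<i> * complex_of_real (1 / sqrt 2))"

end

theory Submission
  imports Defs
begin

text \<open>
  Every unitary coin factors as \<open>D C\<^sub>\<theta> D'\<close> with diagonal unitaries \<open>D\<close>, \<open>D'\<close> and
  \<open>\<theta> \<in> [0, \<pi>/2]\<close>. The row phases \<open>D\<close> only multiply \<open>\<psi>\<^sub>n(j)\<close> by a phase \<open>u\<^sup>n v\<^sup>j\<close>, and the
  column phases \<open>D'\<close> can be moved into the initial coin state, so only the coins \<open>C\<^sub>\<theta>\<close> matter.
  The coins \<open>C\<^sub>\<theta>\<close> commute with the quarter turn \<open>J = [[0, -1], [1, 0]]\<close>, so
  \<open>\<psi>(j) \<mapsto> J \<psi>(-j)\<close> commutes with the walk; as \<open>\<gamma>\<^sub>*\<close> is an eigenvector of \<open>J\<close>, the setup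
  \<open>(C\<^sub>\<theta>, \<gamma>\<^sub>*)\<close> is symmetric. Conversely, symmetry at times 1 and 3 forces
  \<open>|\<gamma>\<^sub>\<up>| = |\<gamma>\<^sub>\<down>|\<close> and, unless \<open>C\<^sub>\<theta>\<close> is diagonal or antidiagonal, \<open>\<gamma>\<^sub>\<down> = \<plusminus>i \<gamma>\<^sub>\<up>\<close>; up to a
  global phase and (as \<open>C\<^sub>\<theta>\<close> is real) complex conjugation this is \<open>\<gamma>\<^sub>*\<close>. Finally
  \<open>p(2, 2) = cos\<^sup>2 \<theta> / 2\<close> recovers \<open>\<theta>\<close>.
\<close>

lemma up_eq [simp]: "up = 1" and down_eq [simp]: "down = 2"
  by (simp_all add: up_def down_def)

lemma coin_theta_entries [simp]:
  "coin_theta t $ 1 $ 1 = cos t" "coin_theta t $ 1 $ 2 = sin t"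
  "coin_theta t $ 2 $ 1 = - sin t" "coin_theta t $ 2 $ 2 = cos t"
  by (simp_all add: coin_theta_def)

lemma cnj_coin_theta_entry: "cnj (coin_theta t $ r $ c) = coin_theta t $ r $ c"
  by (simp add: coin_theta_def)

lemma gamma_star_entries [simp]: "gamma_star $ 1 = 1 / sqrt 2" "gamma_star $ 2 = \<i> / sqrt 2"
  by (simp_all add: gamma_star_def)

lemma dist_equiv_iff: "dist_equiv C \<gamma> C' \<gamma>' \<longleftrightarrow> walk_dist C \<gamma> = walk_dist C' \<gamma>'"
  by (simp add: dist_equiv_def fun_eq_iff)

lemma symmetric_in_distribution_iff:
  "symmetric_in_distribution C \<gamma> \<longleftrightarrow> (\<forall>j. walk_dist C \<gamma> j = walk_dist C \<gamma> (- j))"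
  by (simp add: symmetric_in_distribution_def fun_eq_iff)

lemma norm_vec2_power2: "(norm (v :: complex^2))\<^sup>2 = (cmod (v $ 1))\<^sup>2 + (cmod (v $ 2))\<^sup>2"
  by (simp add: norm_vec_def L2_set_def sum_2)

lemma norm_smult_vec: "norm (c *s (v :: complex^'n)) = cmod c * norm v"
  by (simp add: norm_vec_def L2_set_right_distrib norm_mult)

lemma norm_cnj_vec: "norm (\<chi> k. cnj (v $ k)) = norm (v :: complex^'n)"
  by (simp add: norm_vec_def)

lemma eq_cmod_mult_cis_Arg: "z = complex_of_real (cmod z) * cis (Arg z)"
  by (metis rcis_cmod_Arg rcis_def)

lemma norm_rotation_diff:
  fixes c s :: real and a b :: complex
  shows "(cmod (c * a - s * b))\<^sup>2 - (cmod (s * a + c * b))\<^sup>2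
    = (c\<^sup>2 - s\<^sup>2) * ((cmod a)\<^sup>2 - (cmod b)\<^sup>2) - 4 * c * s * Re (a * cnj b)"
  unfolding cmod_power2 by (simp add: power2_eq_square algebra_simps)

lemma Re_rotation_mult_cnj:
  fixes c s :: real and a b :: complex
  shows "Re ((c * a - s * b) * cnj (s * a + c * b))
    = c * s * ((cmod a)\<^sup>2 - (cmod b)\<^sup>2) + (c\<^sup>2 - s\<^sup>2) * Re (a * cnj b)"
  unfolding cmod_power2 by (simp add: power2_eq_square algebra_simps)

lemma equal_norm_orthogonal_imp_ii_mult:
  assumes "cmod z = cmod w" "Re (z * cnj w) = 0"
  shows "w = \<i> * z \<or> w = - \<i> * z"
proof -
  have "(cmod (w - \<i> * z))\<^sup>2 * (cmod (w + \<i> * z))\<^sup>2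
      = ((cmod z)\<^sup>2 - (cmod w)\<^sup>2)\<^sup>2 + 4 * (Re (z * cnj w))\<^sup>2"
    unfolding cmod_power2 by (simp add: power2_eq_square algebra_simps)
  then have "cmod (w - \<i> * z) * cmod (w + \<i> * z) = 0"
    using assms by (simp flip: power_mult_distrib)
  then show ?thesis
    by (auto simp: eq_neg_iff_add_eq_0)
qed

definition diag_mat :: "('n \<Rightarrow> 'a::semiring_1) \<Rightarrow> 'a^'n^'n" where
  "diag_mat d = (\<chi> r c. if r = c then d r else 0)"

lemma diag_mat_mult_entry [simp]: "(diag_mat d ** A) $ r $ c = d r * A $ r $ c"
  by (simp add: diag_mat_def matrix_matrix_mult_def
      if_distrib [where f = "\<lambda>x. x * y" for y] cong: if_cong)

lemma mult_diag_mat_entry [simp]: "(A ** diag_mat e) $ r $ c = A $ r $ c * e c"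
  by (simp add: diag_mat_def matrix_matrix_mult_def
      if_distrib [where f = "\<lambda>x. y * x" for y] cong: if_cong)

lemma diag_mat_mult_vec_entry [simp]: "(diag_mat e *v v) $ k = e k * v $ k"
  by (simp add: diag_mat_def matrix_vector_mult_def
      if_distrib [where f = "\<lambda>x. x * y" for y] cong: if_cong)

lemma norm_diag_mat_mult_vec:
  "(\<And>k. cmod (e k) = 1) \<Longrightarrow> norm (diag_mat e *v (v :: complex^'n)) = norm v"
  by (simp add: norm_vec_def norm_mult)

lemma unitary2_rows:
  assumes "unitary2 C"
  shows "(cmod (C$1$1))\<^sup>2 + (cmod (C$1$2))\<^sup>2 = 1"
    and "C$2$1 = - det C * cnj (C$1$2)" "C$2$2 = det C * cnj (C$1$1)"
    and "cmod (det C) = 1"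
proof -
  define a b p q where "a = C$1$1" and "b = C$1$2" and "p = C$2$1" and "q = C$2$2"
  have "C ** adj_mat C = mat 1"
    using assms by (simp add: unitary2_def)
  then have "(C ** adj_mat C) $ i $ j = mat 1 $ i $ j" for i j
    by simp
  from this[of 1 1] this[of 2 1] this[of 2 2]
  have r1: "a * cnj a + b * cnj b = 1" and r21: "p * cnj a + q * cnj b = 0"
    and r2: "p * cnj p + q * cnj q = 1"
    by (simp_all add: matrix_matrix_mult_def adj_mat_def mat_def sum_2 a_def b_def p_def q_def)
  have det: "det C = a * q - b * p"
    by (simp add: det_2 a_def b_def p_def q_def)
  have "p + det C * cnj b = a * (p * cnj a + q * cnj b) + p * (1 - (a * cnj a + b * cnj b))"
    "q - det C * cnj a = b * (p * cnj a + q * cnj b) + q * (1 - (a * cnj a + b * cnj b))"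
    by (simp_all add: det algebra_simps)
  then have p: "p = - det C * cnj b" and q: "q = det C * cnj a"
    by (simp_all add: r1 r21 add_eq_0_iff)
  then show "C$2$1 = - det C * cnj (C$1$2)" "C$2$2 = det C * cnj (C$1$1)"
    by (simp_all add: a_def b_def p_def q_def)
  have "complex_of_real ((cmod a)\<^sup>2 + (cmod b)\<^sup>2) = 1"
    using r1 by (simp only: of_real_add complex_norm_square)
  then show "(cmod (C$1$1))\<^sup>2 + (cmod (C$1$2))\<^sup>2 = 1"
    unfolding of_real_eq_1_iff a_def b_def .
  have "p * cnj p + q * cnj q = det C * cnj (det C) * (a * cnj a + b * cnj b)"
    unfolding p q by (simp add: algebra_simps)
  then have "det C * cnj (det C) = 1"
    using r1 r2 by simp
  then have "complex_of_real ((cmod (det C))\<^sup>2) = 1"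
    by (simp only: complex_norm_square)
  then show "cmod (det C) = 1"
    unfolding of_real_eq_1_iff by (simp add: abs_square_eq_1)
qed

text \<open>Writing \<open>a = |a| \<alpha>\<close>, \<open>b = |b| \<beta>\<close> for the first row, the second row is
  \<open>det C (- cnj b, cnj a)\<close>, which dictates the phases \<open>d\<close> and \<open>e\<close>.\<close>

lemma unitary2_decomposition:
  assumes "unitary2 C"
  obtains t d e where "t \<in> {0..pi/2}" "\<And>r. cmod (d r) = 1" "\<And>k. cmod (e k) = 1"
    and "C = diag_mat d ** coin_theta t ** diag_mat e"
proof -
  define a b where "a = C$1$1" and "b = C$1$2"
  define \<alpha> \<beta> where "\<alpha> = cis (Arg a)" and "\<beta> = cis (Arg b)"
  define t where "t = arccos (cmod a)"
  note rows = unitary2_rows[OF assms, folded a_def b_def]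
  have "cmod a \<le> 1"
    using rows(1) by (metis abs_norm_cancel abs_square_le_1 le_add_same_cancel1 zero_le_power2)
  moreover have "- 1 \<le> cmod a"
    by (rule order_trans[of _ 0]) simp_all
  ultimately have t: "t \<in> {0..pi/2}" and cos_t: "cos t = cmod a"
    and "sin t = sqrt (1 - (cmod a)\<^sup>2)"
    using arccos_lbound arccos_le_pi2 by (simp_all add: t_def sin_arccos)
  then have sin_t: "sin t = cmod b"
    by (simp flip: rows(1))
  have a: "cmod a * \<alpha> = a" and b: "cmod b * \<beta> = b"
    unfolding \<alpha>_def \<beta>_def by (simp_all flip: eq_cmod_mult_cis_Arg)
  have "cnj \<alpha> = inverse \<alpha>" "cnj \<beta> = inverse \<beta>"
    by (simp_all add: \<alpha>_def \<beta>_def cis_cnj)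
  then have cnj_a: "cnj a = cmod a / \<alpha>" and cnj_b: "cnj b = cmod b / \<beta>"
    using arg_cong[OF a, of cnj] arg_cong[OF b, of cnj] by (simp_all add: divide_inverse)
  define d where "d = (\<lambda>r::2. if r = 1 then 1 else det C / (\<alpha> * \<beta>))"
  define e where "e = (\<lambda>k::2. if k = 1 then \<alpha> else \<beta>)"
  have "\<alpha> \<noteq> 0" "\<beta> \<noteq> 0"
    by (simp_all add: \<alpha>_def \<beta>_def)
  then have "C = diag_mat d ** coin_theta t ** diag_mat e"
    unfolding vec_eq_iff forall_2 using a b rows(2,3)
    by (simp add: d_def e_def cos_t sin_t cnj_a cnj_b field_simps flip: a_def b_def)
  moreover have "cmod (d r) = 1" "cmod (e r) = 1" for r
    using rows(4) by (simp_all add: d_def e_def \<alpha>_def \<beta>_def norm_divide norm_mult)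
  ultimately show ?thesis
    using t that by blast
qed

section \<open>Invariances of the walk\<close>

lemma walk_state_0: "walk_state C \<gamma> 0 j = (if j = 0 then \<gamma> else 0)"
  by (simp add: walk_state_def)

lemma walk_state_Suc_up:
  "walk_state C \<gamma> (Suc n) j $ 1
     = C$1$1 * walk_state C \<gamma> n (j - 1) $ 1 + C$1$2 * walk_state C \<gamma> n (j - 1) $ 2"
  by (simp add: walk_state_def walk_step_def matrix_vector_mult_def sum_2)

lemma walk_state_Suc_down:
  "walk_state C \<gamma> (Suc n) j $ 2
     = C$2$1 * walk_state C \<gamma> n (j + 1) $ 1 + C$2$2 * walk_state C \<gamma> n (j + 1) $ 2"
  by (simp add: walk_state_def walk_step_def matrix_vector_mult_def sum_2)

lemmas walk_state_Suc = walk_state_Suc_up walk_state_Suc_down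

lemma walk_state_smult: "walk_state C (l *s \<gamma>) n j = l *s walk_state C \<gamma> n j"
proof (induction n arbitrary: j)
  case 0
  show ?case by (simp add: walk_state_0)
next
  case (Suc n)
  show ?case by (simp add: vec_eq_iff forall_2 walk_state_Suc Suc.IH algebra_simps)
qed

lemma walk_state_cnj:
  assumes "\<And>r c. cnj (C $ r $ c) = C $ r $ c"
  shows "walk_state C (\<chi> k. cnj (\<gamma> $ k)) n j = (\<chi> k. cnj (walk_state C \<gamma> n j $ k))"
proof (induction n arbitrary: j)
  case 0
  show ?case by (simp add: vec_eq_iff walk_state_0)
next
  case (Suc n)
  show ?case by (simp add: vec_eq_iff forall_2 walk_state_Suc Suc.IH assms)
qed

lemma walk_dist_smult: "cmod l = 1 \<Longrightarrow> walk_dist C (l *s \<gamma>) = walk_dist C \<gamma>"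
  by (simp add: fun_eq_iff walk_dist_def walk_state_smult norm_smult_vec)

lemma walk_dist_cnj:
  "(\<And>r c. cnj (C $ r $ c) = C $ r $ c) \<Longrightarrow> walk_dist C (\<chi> k. cnj (\<gamma> $ k)) = walk_dist C \<gamma>"
  by (simp add: fun_eq_iff walk_dist_def walk_state_cnj norm_cnj_vec)

text \<open>The up component at \<open>j\<close> comes from \<open>j - 1\<close> and the down component from \<open>j + 1\<close>, so
  the row phases \<open>u v\<close>, \<open>u / v\<close> are exactly compensated by the gauge factor \<open>u\<^sup>n v\<^sup>j\<close>.\<close>

lemma walk_state_row_phases:
  assumes "v \<noteq> 0"
  shows "walk_state (diag_mat (\<lambda>r. if r = 1 then u * v else u / v) ** A) \<gamma> n j
    = (u ^ n * v powi j) *s walk_state A \<gamma> n j"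
proof (induction n arbitrary: j)
  case 0
  show ?case by (simp add: walk_state_0)
next
  case (Suc n)
  have up: "v powi j = v powi (j - 1) * v"
    using assms by (simp add: power_int_minus_mult)
  have down: "v powi (j + 1) = v powi j * v"
    using assms by (simp add: power_int_add_1)
  show ?case
    unfolding vec_eq_iff forall_2 using assms
    by (simp add: walk_state_Suc Suc.IH down, subst up, simp add: algebra_simps)
qed

lemma walk_dist_row_phases:
  assumes "\<And>r. cmod (d r) = 1"
  shows "walk_dist (diag_mat d ** A) \<gamma> = walk_dist A \<gamma>"
proof -
  define v where "v = csqrt (d 1 / d 2)"
  define u where "u = d 1 / v"
  have "d r \<noteq> 0" for r
    using assms[of r] by auto
  then have "v \<noteq> 0" "v * v = d 1 / d 2"
    by (simp_all add: v_def flip: power2_eq_square)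
  then have d: "d = (\<lambda>r. if r = 1 then u * v else u / v)"
    using \<open>d 2 \<noteq> 0\<close> by (auto simp: fun_eq_iff forall_2 u_def field_simps)
  have "cmod v = 1" "cmod u = 1"
    using assms[of 1] assms[of 2] by (simp_all add: u_def v_def norm_divide)
  then show ?thesis
    unfolding fun_eq_iff walk_dist_def d walk_state_row_phases[OF \<open>v \<noteq> 0\<close>]
    by (simp add: norm_smult_vec norm_mult norm_power norm_power_int)
qed

text \<open>The conditional shift commutes with diagonal matrices.\<close>

lemma walk_state_diag_mat_intertwine:
  "walk_state (diag_mat e ** A) (diag_mat e *v \<gamma>) n j
    = diag_mat e *v walk_state (A ** diag_mat e) \<gamma> n j"
proof (induction n arbitrary: j)
  case 0
  show ?case by (simp add: vec_eq_iff walk_state_0)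
next
  case (Suc n)
  show ?case by (simp add: vec_eq_iff forall_2 walk_state_Suc Suc.IH algebra_simps)
qed

lemma walk_dist_column_phases:
  assumes "\<And>k. cmod (e k) = 1"
  shows "walk_dist (A ** diag_mat e) \<gamma> = walk_dist A (diag_mat e *v \<gamma>)"
proof -
  have "walk_dist (A ** diag_mat e) \<gamma> = walk_dist (diag_mat e ** A) (diag_mat e *v \<gamma>)"
    by (simp add: fun_eq_iff walk_dist_def walk_state_diag_mat_intertwine norm_diag_mat_mult_vec assms)
  also have "\<dots> = walk_dist A (diag_mat e *v \<gamma>)"
    by (rule walk_dist_row_phases[OF assms])
  finally show ?thesis .
qed

definition rot90 :: "complex^2 \<Rightarrow> complex^2" where
  "rot90 v = (\<chi> k. if k = 1 then - v $ 2 else v $ 1)"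

lemma rot90_entries [simp]: "rot90 v $ 1 = - v $ 2" "rot90 v $ 2 = v $ 1"
  by (simp_all add: rot90_def)

lemma norm_rot90 [simp]: "norm (rot90 v) = norm v"
  by (simp add: norm_vec_def L2_set_def sum_2 rot90_def add.commute)

lemma walk_state_rot90:
  assumes "C$1$1 = C$2$2" "C$1$2 = - C$2$1"
  shows "walk_state C (rot90 \<gamma>) n j = rot90 (walk_state C \<gamma> n (- j))"
proof (induction n arbitrary: j)
  case 0
  show ?case by (simp add: vec_eq_iff forall_2 walk_state_0)
next
  case (Suc n)
  have "- (j - 1) = - j + 1" "- (j + 1) = - j - 1"
    by simp_all
  then show ?case
    by (simp only: vec_eq_iff forall_2 walk_state_Suc Suc.IH rot90_entries) (simp add: assms)
qed

lemma rot90_gamma_star: "rot90 gamma_star = (- \<i>) *s gamma_star"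
  by (simp add: vec_eq_iff forall_2)

lemma symmetric_gamma_star:
  assumes "C$1$1 = C$2$2" "C$1$2 = - C$2$1"
  shows "symmetric_in_distribution C gamma_star"
proof -
  have "(- \<i>) *s walk_state C gamma_star n j = rot90 (walk_state C gamma_star n (- j))" for n j
    using walk_state_rot90[OF assms, of gamma_star n j] unfolding rot90_gamma_star walk_state_smult .
  then have "norm (walk_state C gamma_star n j) = norm (walk_state C gamma_star n (- j))" for n j
    by (metis norm_rot90 norm_smult_vec norm_minus_cancel norm_ii mult_1)
  then show ?thesis
    by (simp add: symmetric_in_distribution_def walk_dist_def)
qed

section \<open>Symmetric setups for the coins \<open>C\<^sub>\<theta>\<close>\<close>

lemma walk_dist_coin_theta_gamma_star_2_2: "walk_dist (coin_theta t) gamma_star 2 2 = (cos t)\<^sup>2 / 2"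
proof -
  have "walk_state (coin_theta t) gamma_star 2 2 = (\<chi> k. if k = 1 then cos t / sqrt 2 * cis t else 0)"
    by (simp add: vec_eq_iff forall_2 numeral_2_eq_2 walk_state_Suc walk_state_0 cis.ctr Complex_eq
        field_simps)
  then show ?thesis
    by (simp add: walk_dist_def norm_vec2_power2 norm_mult norm_divide power_divide)
qed

lemma coin_theta_dist_equiv_imp_eq:
  assumes "t \<in> {0..pi/2}" "t' \<in> {0..pi/2}"
    and "dist_equiv (coin_theta t) gamma_star (coin_theta t') gamma_star"
  shows "t = t'"
proof -
  have "walk_dist (coin_theta t) gamma_star 2 2 = walk_dist (coin_theta t') gamma_star 2 2"
    using assms(3) unfolding dist_equiv_def by blast
  then have "(cos t)\<^sup>2 = (cos t')\<^sup>2"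
    by (simp add: walk_dist_coin_theta_gamma_star_2_2)
  moreover have "0 \<le> cos t" "0 \<le> cos t'"
    using assms(1,2) by (auto intro!: cos_ge_zero)
  ultimately have "cos t = cos t'"
    by (simp add: power2_eq_iff_nonneg)
  then show ?thesis
    using assms(1,2) by (auto intro: cos_inj_pi)
qed

lemma walk_dist_coin_theta_first_steps:
  fixes t :: real and \<gamma> :: "complex^2"
  defines "c \<equiv> cos t" and "s \<equiv> sin t"
  defines "a \<equiv> c * \<gamma>$1 + s * \<gamma>$2" and "b \<equiv> c * \<gamma>$2 - s * \<gamma>$1"
  shows "walk_dist (coin_theta t) \<gamma> 1 1 = (cmod a)\<^sup>2"
    and "walk_dist (coin_theta t) \<gamma> (-1) 1 = (cmod b)\<^sup>2"
    and "walk_dist (coin_theta t) \<gamma> 1 3 = s\<^sup>2 * (cmod (c * b - s * a))\<^sup>2 + s\<^sup>2 * c\<^sup>2 * (cmod a)\<^sup>2"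
    and "walk_dist (coin_theta t) \<gamma> (-1) 3 = s\<^sup>2 * c\<^sup>2 * (cmod b)\<^sup>2 + s\<^sup>2 * (cmod (s * b + c * a))\<^sup>2"
proof -
  have state_1_1: "walk_state (coin_theta t) \<gamma> 1 1 = (\<chi> k. if k = 1 then a else 0)"
    unfolding One_nat_def vec_eq_iff forall_2
    by (simp add: walk_state_Suc walk_state_0 a_def c_def s_def)
  have state_m1_1: "walk_state (coin_theta t) \<gamma> 1 (-1) = (\<chi> k. if k = 1 then 0 else b)"
    unfolding One_nat_def vec_eq_iff forall_2
    by (simp add: walk_state_Suc walk_state_0 b_def c_def s_def)
  have state_1_3: "walk_state (coin_theta t) \<gamma> 3 1
      = (\<chi> k. if k = 1 then s * (c * b - s * a) else - (s * (c * a)))"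
    unfolding numeral_3_eq_3 vec_eq_iff forall_2
    by (simp add: walk_state_Suc walk_state_0 a_def b_def c_def s_def algebra_simps)
  have state_m1_3: "walk_state (coin_theta t) \<gamma> 3 (-1)
      = (\<chi> k. if k = 1 then s * (c * b) else - (s * (s * b + c * a)))"
    unfolding numeral_3_eq_3 vec_eq_iff forall_2
    by (simp add: walk_state_Suc walk_state_0 a_def b_def c_def s_def algebra_simps)
  show "walk_dist (coin_theta t) \<gamma> 1 1 = (cmod a)\<^sup>2"
    using state_1_1 by (simp add: walk_dist_def norm_vec2_power2)
  show "walk_dist (coin_theta t) \<gamma> (-1) 1 = (cmod b)\<^sup>2"
    using state_m1_1 by (simp add: walk_dist_def norm_vec2_power2)
  show "walk_dist (coin_theta t) \<gamma> 1 3 = s\<^sup>2 * (cmod (c * b - s * a))\<^sup>2 + s\<^sup>2 * c\<^sup>2 * (cmod a)\<^sup>2"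
    using state_1_3 by (simp add: walk_dist_def norm_vec2_power2 norm_mult power_mult_distrib)
  show "walk_dist (coin_theta t) \<gamma> (-1) 3 = s\<^sup>2 * c\<^sup>2 * (cmod b)\<^sup>2 + s\<^sup>2 * (cmod (s * b + c * a))\<^sup>2"
    using state_m1_3 by (simp add: walk_dist_def norm_vec2_power2 norm_mult power_mult_distrib)
qed

text \<open>\<open>a\<close>, \<open>b\<close> are the amplitudes after the first step. Symmetry at time 1 gives \<open>|a| = |b|\<close>,
  at time 3 it gives \<open>c s Re (a cnj b) = 0\<close>; rotating \<open>(a, b)\<close> back to \<open>\<gamma>\<close> gives the claims.\<close>

lemma symmetric_coin_theta_constraints:
  assumes "symmetric_in_distribution (coin_theta t) \<gamma>"
  shows "cmod (\<gamma>$1) = cmod (\<gamma>$2)"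
    and "cos t * sin t \<noteq> 0 \<Longrightarrow> Re (\<gamma>$1 * cnj (\<gamma>$2)) = 0"
proof -
  define c s where "c = cos t" and "s = sin t"
  define a b where "a = c * \<gamma>$1 + s * \<gamma>$2" and "b = c * \<gamma>$2 - s * \<gamma>$1"
  define R where "R = Re (a * cnj b)"
  note dists = walk_dist_coin_theta_first_steps[of t \<gamma>, folded c_def s_def, folded a_def b_def]
  have "c\<^sup>2 + s\<^sup>2 = 1"
    by (simp add: c_def s_def)
  then have "complex_of_real c * c + complex_of_real s * s = 1"
    by (metis of_real_add of_real_mult of_real_1 power2_eq_square)
  moreover have "c * a - s * b = (c * c + s * s) * \<gamma>$1" "s * a + c * b = (c * c + s * s) * \<gamma>$2"
    by (simp_all add: a_def b_def algebra_simps)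
  ultimately have \<gamma>: "\<gamma>$1 = c * a - s * b" "\<gamma>$2 = s * a + c * b"
    by simp_all
  have ab: "(cmod a)\<^sup>2 = (cmod b)\<^sup>2"
    using assms dists(1,2) unfolding symmetric_in_distribution_def by metis
  have "walk_dist (coin_theta t) \<gamma> 1 3 = walk_dist (coin_theta t) \<gamma> (-1) 3"
    using assms unfolding symmetric_in_distribution_def by metis
  then have "s\<^sup>2 * ((cmod (c * b - s * a))\<^sup>2 - (cmod (s * b + c * a))\<^sup>2) = 0"
    using ab unfolding dists(3,4) by (simp add: algebra_simps)
  moreover have "Re (b * cnj a) = R"
    by (simp add: R_def)
  ultimately have "s\<^sup>2 * (c * s * R) = 0"
    using ab norm_rotation_diff[of c b s a] by simp
  then have csR: "c * s * R = 0"
    by auto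
  have "(cmod (\<gamma>$1))\<^sup>2 - (cmod (\<gamma>$2))\<^sup>2 = - 4 * (c * s * R)"
    using norm_rotation_diff[of c a s b, folded R_def] ab by (simp add: \<gamma>)
  then show "cmod (\<gamma>$1) = cmod (\<gamma>$2)"
    using csR by simp
  show "Re (\<gamma>$1 * cnj (\<gamma>$2)) = 0" if "cos t * sin t \<noteq> 0"
    using Re_rotation_mult_cnj[of c a s b] that ab csR by (simp add: \<gamma> c_def s_def R_def)
qed

lemma walk_dist_coin_theta_degenerate_phases:
  assumes "cos t * sin t = 0" "\<And>k. cmod (e k) = 1"
  shows "walk_dist (coin_theta t) (diag_mat e *v \<gamma>) = walk_dist (coin_theta t) \<gamma>"
proof -
  obtain e' where e': "coin_theta t ** diag_mat e = diag_mat e' ** coin_theta t" "\<And>k. cmod (e' k) = 1"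
  proof (cases "sin t = 0")
    case True
    show ?thesis
      by (rule that[of e]) (simp_all add: vec_eq_iff forall_2 True assms(2))
  next
    case False
    then have "cos t = 0"
      using assms(1) by simp
    show ?thesis
      by (rule that[of "\<lambda>k. if k = 1 then e 2 else e 1"])
        (simp_all add: vec_eq_iff forall_2 \<open>cos t = 0\<close> assms(2))
  qed
  have "walk_dist (coin_theta t) (diag_mat e *v \<gamma>) = walk_dist (diag_mat e' ** coin_theta t) \<gamma>"
    by (simp add: walk_dist_column_phases assms(2) flip: e'(1))
  also have "\<dots> = walk_dist (coin_theta t) \<gamma>"
    by (rule walk_dist_row_phases[OF e'(2)])
  finally show ?thesis .
qed

lemma symmetric_coin_theta_dist_equiv_gamma_star:
  assumes "norm \<gamma> = 1" "symmetric_in_distribution (coin_theta t) \<gamma>"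
  shows "dist_equiv (coin_theta t) \<gamma> (coin_theta t) gamma_star"
proof -
  have eq: "cmod (\<gamma>$1) = cmod (\<gamma>$2)"
    by (rule symmetric_coin_theta_constraints(1)[OF assms(2)])
  have "(cmod (\<gamma>$1))\<^sup>2 + (cmod (\<gamma>$2))\<^sup>2 = 1"
    using assms(1) by (simp flip: norm_vec2_power2)
  then have "(sqrt 2 * cmod (\<gamma>$k))\<^sup>2 = 1" for k
    using eq exhaust_2[of k] by (auto simp: power_mult_distrib)
  then have unit: "cmod (sqrt 2 * \<gamma>$k) = 1" for k
    by (simp add: norm_mult abs_square_eq_1)
  show ?thesis
  proof (cases "cos t * sin t = 0")
    case True
    define e where "e = (\<lambda>k::2. if k = 1 then sqrt 2 * \<gamma>$1 else - \<i> * (sqrt 2 * \<gamma>$2))"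
    have "\<gamma> = diag_mat e *v gamma_star"
      by (simp add: vec_eq_iff forall_2 e_def field_simps)
    then show ?thesis
      using walk_dist_coin_theta_degenerate_phases[OF True, of e gamma_star] unit
      by (simp add: dist_equiv_iff e_def norm_mult)
  next
    case False
    define l where "l = sqrt 2 * \<gamma>$1"
    have "cmod l = 1"
      using unit[of 1] by (simp add: l_def)
    have "\<gamma>$2 = \<i> * \<gamma>$1 \<or> \<gamma>$2 = - \<i> * \<gamma>$1"
      using eq symmetric_coin_theta_constraints(2)[OF assms(2) False]
      by (rule equal_norm_orthogonal_imp_ii_mult)
    then show ?thesis
    proof
      assume "\<gamma>$2 = \<i> * \<gamma>$1"
      then have "\<gamma> = l *s gamma_star"
        by (simp add: vec_eq_iff forall_2 l_def)
      then show ?thesis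
        using walk_dist_smult[OF \<open>cmod l = 1\<close>] by (simp add: dist_equiv_iff)
    next
      assume "\<gamma>$2 = - \<i> * \<gamma>$1"
      then have "\<gamma> = (\<chi> k. cnj ((cnj l *s gamma_star) $ k))"
        by (simp add: vec_eq_iff forall_2 l_def)
      then have "walk_dist (coin_theta t) \<gamma> = walk_dist (coin_theta t) (cnj l *s gamma_star)"
        by (simp only: walk_dist_cnj cnj_coin_theta_entry)
      also have "\<dots> = walk_dist (coin_theta t) gamma_star"
        using \<open>cmod l = 1\<close> by (simp add: walk_dist_smult)
      finally show ?thesis
        by (simp add: dist_equiv_iff)
    qed
  qed
qed

lemma symmetric_imp_dist_equiv_coin_theta:
  assumes "coin_setup C \<gamma>" "symmetric_in_distribution C \<gamma>"
  shows "\<exists>t\<in>{0..pi/2}. dist_equiv C \<gamma> (coin_theta t) gamma_star"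
proof -
  have "unitary2 C" "norm \<gamma> = 1"
    using assms(1) by (simp_all add: coin_setup_def)
  obtain t d e where t: "t \<in> {0..pi/2}" and d: "\<And>r. cmod (d r) = 1" and e: "\<And>k. cmod (e k) = 1"
    and C: "C = diag_mat d ** coin_theta t ** diag_mat e"
    using unitary2_decomposition[OF \<open>unitary2 C\<close>] by blast
  define \<gamma>' where "\<gamma>' = diag_mat e *v \<gamma>"
  have dist: "walk_dist C \<gamma> = walk_dist (coin_theta t) \<gamma>'"
    unfolding C matrix_mul_assoc walk_dist_row_phases[OF d] walk_dist_column_phases[OF e] \<gamma>'_def ..
  have "norm \<gamma>' = 1"
    using \<open>norm \<gamma> = 1\<close> by (simp add: \<gamma>'_def norm_diag_mat_mult_vec e)
  moreover have "symmetric_in_distribution (coin_theta t) \<gamma>'"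
    using assms(2) by (simp add: symmetric_in_distribution_iff dist)
  ultimately have "dist_equiv (coin_theta t) \<gamma>' (coin_theta t) gamma_star"
    by (rule symmetric_coin_theta_dist_equiv_gamma_star)
  then show ?thesis
    using t by (auto simp: dist_equiv_iff dist)
qed

theorem theorem2:
  shows "(\<forall>\<theta>\<in>{0..pi/2}. symmetric_in_distribution (coin_theta \<theta>) gamma_star)
    \<and> (\<forall>C \<gamma>. coin_setup C \<gamma> \<and> symmetric_in_distribution C \<gamma> \<longrightarrow>
          (\<exists>\<theta>\<in>{0..pi/2}. dist_equiv C \<gamma> (coin_theta \<theta>) gamma_star))
    \<and> (\<forall>\<theta>\<in>{0..pi/2}. \<forall>\<theta>'\<in>{0..pi/2}.
          dist_equiv (coin_theta \<theta>) gamma_star (coin_theta \<theta>') gamma_star \<longrightarrow> \<theta> = \<theta>')"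
  using symmetric_imp_dist_equiv_coin_theta coin_theta_dist_equiv_imp_eq
  by (simp add: symmetric_gamma_star)

end
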